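(* Consider the stochastic energy exchange model and the notation of the context. For every sufficiently small $\eta>0$ there is a constant $C>0$ depending on $N$ and $\eta$ such that for every $\mathbf{E}\in\mathbb{R}^N_+$, $1\le n\le N$ and $1\le k\le N-n+1$, $$\mathbb{E}_{\mathbf{E}}\big[V_{n,k}(\mathbf{E}_{\tau_1^+})\mid\mathcal{C}_k(\tau_1)\big]\le C\,V_{n,k}(\mathbf{E})\quad\text{and}\quad \mathbb{E}_{\mathbf{E}}\big[V_{n,k}(\mathbf{E}_{\tau_1^+})\mid\mathcal{C}_{k+n}(\tau_1)\big]\le C\,V_{n,k}(\mathbf{E}).$$
   Context: Fix $N\ge1$, $T_L,T_R>0$, a sufficiently large $K$ ($K\gg T_L,T_R$) and $R(a,b)=\min\{K,\sqrt{\min(a,b)}\}$. Write $E_0:=T_L$, $E_{N+1}:=T_R$. The stochastic energy exchange model is the Markov jump process $\mathbf{E}_t=(E_1(t),\dots,E_N(t))$ on $\mathbb{R}^N_+$ with independent exponential clocks $i=1,\dots,N+1$, clock $i$ having rate $R_i=R(E_{i-1},E_i)$. When clock $i$ with $2\le i\le N$ rings, $(E_{i-1},E_i)\mapsto(p(E_{i-1}+E_i),(1-p)(E_{i-1}+E_i))$, $p$ uniform on $(0,1)$; when clock $1$ (resp. $N+1$) rings, $E_1\mapsto p(E_1+X_L)$ (resp. $E_N\mapsto p(E_N+X_R)$), $X_L,X_R$ exponential with means $T_L,T_R$; all randomness independent. Let $\tau_1$ be the time of the first clock ring, $\mathcal{C}_i(\tau_1)$ the event that the ring at $\tau_1$ is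 clock $i$, $\mathbf{E}_{\tau_1^+}$ the configuration immediately after that ring, and $\mathbb{E}_{\mathbf{E}}$ expectation with $\mathbf{E}_0=\mathbf{E}$. Let $a_m=1-\frac{2^{m-1}-1}{2^N-1}$ and $V_{n,k}(\mathbf{E})=\big(\sum_{j=0}^{n-1}E_{k+j}\big)^{a_n\eta-1}$. *)

theory Defs
  imports "HOL-Probability.Probability"
begin

text \<open>Configurations are functions nat => real; only the coordinates 1..N matter.\<close>

definition a_coef :: "nat \<Rightarrow> nat \<Rightarrow> real" where
  "a_coef N m = 1 - (2 ^ (m - 1) - 1) / (2 ^ N - 1)"

definition V :: "nat \<Rightarrow> real \<Rightarrow> nat \<Rightarrow> nat \<Rightarrow> (nat \<Rightarrow> real) \<Rightarrow> real" where
  "V N \<eta> n k E = (\<Sum>j<n. E (k + j)) powr (a_coef N n * \<eta> - 1)"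

text \<open>Configuration right after clock i rings from configuration E, given the
  uniform variable p and (for boundary clocks) the exponential variable x.\<close>
definition jump :: "nat \<Rightarrow> nat \<Rightarrow> (nat \<Rightarrow> real) \<Rightarrow> real \<Rightarrow> real \<Rightarrow> (nat \<Rightarrow> real)" where
  "jump N i E p x =
     (if i = 1 then E(1 := p * (E 1 + x))
      else if i = N + 1 then E(N := p * (E N + x))
      else E(i - 1 := p * (E (i - 1) + E i), i := (1 - p) * (E (i - 1) + E i)))"

text \<open>Conditional expectation of f(E_{tau_1^+}) given that the first ring is clock i,
  started at E: integral over p uniform on (0,1) and the (independent) exponential
  bath variable X_L (mean T_L) for i = 1, X_R (mean T_R) for i = N+1.\<close>
definition cond_exp_after_ring ::
  "nat \<Rightarrow> real \<Rightarrow> real \<Rightarrow> nat \<Rightarrow> ((nat \<Rightarrow> real) \<Rightarrow> real) \<Rightarrow> (nat \<Rightarrow> real) \<Rightarrow> ennreal" where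
  "cond_exp_after_ring N TL TR i f E =
     (if i = 1 \<or> i = N + 1 then
        (\<integral>\<^sup>+ p. indicator {0<..<1} p *
           (\<integral>\<^sup>+ x. ennreal (exponential_density (1 / (if i = 1 then TL else TR)) x)
                    * ennreal (f (jump N i E p x)) \<partial>lborel) \<partial>lborel)
      else
        (\<integral>\<^sup>+ p. indicator {0<..<1} p * ennreal (f (jump N i E p 0)) \<partial>lborel))"

end

theory Submission
  imports Defs
begin

text \<open>The observable \<open>V\<^sub>n\<^sub>,\<^sub>k\<close> is a nonpositive power \<open>b = a\<^sub>n\<eta> - 1 \<in> (-1, 0]\<close> of the energy
  in the block \<open>k, \<dots>, k + n - 1\<close>. A ring of the clock at either end of the block keeps at least
  the fraction \<open>q\<close> of every block energy, where \<open>q\<close> is \<open>p\<close> or \<open>1 - p\<close> with \<open>p\<close> uniform, so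
  \<open>V\<close> grows at most by the factor \<open>q\<^sup>b\<close>, whose mean is \<open>1 / (b + 1) = 1 / (a\<^sub>n\<eta>) \<le> 2 / \<eta>\<close>.\<close>

lemma nn_integral_powr_unit_interval:
  fixes b :: real
  assumes "-1 < b"
  shows "(\<integral>\<^sup>+p. indicator {0<..<1} p * ennreal (p powr b) \<partial>lborel) = ennreal (1 / (b + 1))"
proof -
  have "((\<lambda>p. p powr b) has_integral (1 / (b + 1))) (cbox 0 1)"
    using has_integral_powr_from_0[OF assms, of 1] by simp
  then have "((\<lambda>p. p powr b) has_integral (1 / (b + 1))) (box 0 1)"
    by (simp only: has_integral_open_interval)
  then have "((\<lambda>p. p powr b) has_integral (1 / (b + 1))) {0<..<1}"
    by (simp add: box_real)
  from nn_integral_has_integral_lebesgue[OF _ this] show ?thesis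
    by (simp add: indicator_mult_ennreal)
qed

lemma nn_integral_one_minus_powr_unit_interval:
  fixes b :: real
  assumes "-1 < b"
  shows "(\<integral>\<^sup>+p. indicator {0<..<1} p * ennreal ((1 - p) powr b) \<partial>lborel) = ennreal (1 / (b + 1))"
proof -
  have "(\<integral>\<^sup>+p. indicator {0<..<1} p * ennreal (p powr b) \<partial>lborel)
      = (\<integral>\<^sup>+p. indicator {0<..<1} (1 - p) * ennreal ((1 - p) powr b) \<partial>lborel)"
    using nn_integral_real_affine[of "\<lambda>p. indicator {0<..<1} p * ennreal (p powr b)" "-1" 1]
    by simp
  also have "(\<lambda>p. indicator {0<..<1} (1 - p)) = (indicator {0<..<1} :: real \<Rightarrow> ennreal)"
    by (auto simp: indicator_def)
  finally show ?thesis
    using nn_integral_powr_unit_interval[OF assms] by simp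
qed

lemma nn_integral_exponential_density:
  assumes "0 < l"
  shows "(\<integral>\<^sup>+x. ennreal (exponential_density l x) \<partial>lborel) = 1"
proof -
  interpret prob_space "density lborel (exponential_density l)"
    using prob_space_exponential_density[OF assms] .
  show ?thesis
    using emeasure_space_1 by (simp add: emeasure_density)
qed

lemma sum_powr_le_scaled:
  fixes E E' :: "'a \<Rightarrow> real" and b q :: real
  assumes "b \<le> 0" and "0 < sum E A" and "0 < q" and "\<And>j. j \<in> A \<Longrightarrow> q * E j \<le> E' j"
  shows "sum E' A powr b \<le> q powr b * sum E A powr b"
proof -
  have "q * sum E A \<le> sum E' A"
    unfolding sum_distrib_left by (intro sum_mono assms(4))
  then have "sum E' A powr b \<le> (q * sum E A) powr b"
    using assms by (intro powr_mono2') auto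
  also have "\<dots> = q powr b * sum E A powr b"
    using assms by (simp add: powr_mult)
  finally show ?thesis .
qed

lemma a_coef_bounds:
  assumes "1 \<le> n" and "n \<le> N"
  shows "1 / 2 \<le> a_coef N n" and "a_coef N n \<le> 1"
proof -
  have mono: "(2::real) ^ (n - 1) \<le> 2 ^ (N - 1)"
    using assms by (intro power_increasing) auto
  have double: "(2::real) ^ N = 2 * 2 ^ (N - 1)"
    using assms by (cases N) auto
  have one: "(1::real) \<le> 2 ^ (n - 1)"
    by simp
  have "0 < (2 ^ N - 1 :: real)"
    using mono double one by linarith
  moreover have "2 * 2 ^ (n - 1) - 2 \<le> (2 ^ N - 1 :: real)"
    using mono double by linarith
  ultimately show "1 / 2 \<le> a_coef N n" and "a_coef N n \<le> 1"
    using one unfolding a_coef_def by (simp_all add: field_simps)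
qed

lemma jump_left_clock_keeps_fraction:
  assumes pos: "\<forall>j\<in>{1..N}. 0 < E j" and "1 \<le> k" and "k + n \<le> N + 1"
    and p: "p \<in> {0<..<1}" and "0 \<le> x" and "j < n"
  shows "(if k = 1 then p else 1 - p) * E (k + j) \<le> jump N k E p x (k + j)"
proof -
  have "0 < E (k + j)"
    using pos assms by auto
  then have unchanged: "q * E (k + j) \<le> E (k + j)" if "q \<le> 1" "0 \<le> q" for q
    using that by (intro mult_left_le_one_le) auto
  show ?thesis
  proof (cases "k = 1")
    case True
    then show ?thesis
      using p \<open>0 \<le> x\<close> unchanged[of p]
      by (cases "j = 0") (auto simp: jump_def intro: mult_left_mono)
  next
    case False
    have "k - 1 \<in> {1..N}"
      using False assms by auto
    then have "0 < E (k - 1)"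
      using pos by blast
    then show ?thesis
      using p False \<open>k + n \<le> N + 1\<close> \<open>j < n\<close> unchanged[of "1 - p"]
      by (cases "j = 0") (auto simp: jump_def intro: mult_left_mono)
  qed
qed

lemma jump_right_clock_keeps_fraction:
  assumes pos: "\<forall>j\<in>{1..N}. 0 < E j" and "1 \<le> k" and "k + n \<le> N + 1"
    and p: "p \<in> {0<..<1}" and "0 \<le> x" and "j < n"
  shows "p * E (k + j) \<le> jump N (k + n) E p x (k + j)"
proof -
  have "0 < E (k + j)"
    using pos assms by auto
  then have unchanged: "p * E (k + j) \<le> E (k + j)"
    using p by (intro mult_left_le_one_le) auto
  show ?thesis
  proof (cases "k + n = N + 1")
    case True
    then show ?thesis
      using p \<open>0 \<le> x\<close> unchanged \<open>1 \<le> k\<close>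
      by (cases "k + j = N") (auto simp: jump_def intro: mult_left_mono)
  next
    case False
    have "0 < E (k + n)"
      using pos False assms by auto
    then show ?thesis
      using p False \<open>1 \<le> k\<close> \<open>j < n\<close> unchanged
      by (cases "k + j = k + n - 1") (auto simp: jump_def intro: mult_left_mono)
  qed
qed

lemma cond_exp_after_ring_le:
  assumes "0 < TL" and "0 < TR"
    and bound: "\<And>p x. p \<in> {0<..<1} \<Longrightarrow> 0 \<le> x \<Longrightarrow> f (jump N i E p x) \<le> w p"
  shows "cond_exp_after_ring N TL TR i f E
    \<le> (\<integral>\<^sup>+p. indicator {0<..<1} p * ennreal (w p) \<partial>lborel)"
proof (cases "i = 1 \<or> i = N + 1")
  case True
  define l where "l = 1 / (if i = 1 then TL else TR)"
  have "0 < l"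
    using assms by (simp add: l_def)
  have bath: "(\<integral>\<^sup>+x. ennreal (exponential_density l x) * ennreal (f (jump N i E p x)) \<partial>lborel)
      \<le> ennreal (w p)" if "p \<in> {0<..<1}" for p
  proof -
    have "(\<integral>\<^sup>+x. ennreal (exponential_density l x) * ennreal (f (jump N i E p x)) \<partial>lborel)
        \<le> (\<integral>\<^sup>+x. ennreal (exponential_density l x) * ennreal (w p) \<partial>lborel)"
      using that
      by (intro nn_integral_mono) (auto simp: exponential_density_def intro!: mult_left_mono ennreal_leI bound)
    also have "\<dots> = (\<integral>\<^sup>+x. ennreal (exponential_density l x) \<partial>lborel) * ennreal (w p)"
      by (rule nn_integral_multc) measurable
    also have "\<dots> = ennreal (w p)"
      using nn_integral_exponential_density[OF \<open>0 < l\<close>] by simp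
    finally show ?thesis .
  qed
  have "cond_exp_after_ring N TL TR i f E = (\<integral>\<^sup>+p. indicator {0<..<1} p *
      (\<integral>\<^sup>+x. ennreal (exponential_density l x) * ennreal (f (jump N i E p x)) \<partial>lborel) \<partial>lborel)"
    using True by (simp add: cond_exp_after_ring_def l_def)
  also have "\<dots> \<le> (\<integral>\<^sup>+p. indicator {0<..<1} p * ennreal (w p) \<partial>lborel)"
    using bath by (intro nn_integral_mono) (auto split: split_indicator)
  finally show ?thesis .
next
  case False
  then show ?thesis
    unfolding cond_exp_after_ring_def
    by (auto intro!: nn_integral_mono ennreal_leI bound split: split_indicator)
qed

lemma cond_exp_after_ring_V_le:
  assumes "0 < TL" and "0 < TR" and "0 < \<eta>" and "\<eta> \<le> 1"
    and "1 \<le> n" and "n \<le> N" and pos: "\<forall>j\<in>{1..N}. 0 < E j" and "1 \<le> k" and "k + n \<le> N + 1"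
    and q: "q = (\<lambda>p. p) \<or> q = (\<lambda>p. 1 - p)"
    and keep: "\<And>p x j. p \<in> {0<..<1} \<Longrightarrow> 0 \<le> x \<Longrightarrow> j < n \<Longrightarrow> q p * E (k + j) \<le> jump N i E p x (k + j)"
  shows "cond_exp_after_ring N TL TR i (V N \<eta> n k) E \<le> ennreal (2 / \<eta> * V N \<eta> n k E)"
proof -
  define a where "a = a_coef N n"
  define b where "b = a * \<eta> - 1"
  have a: "1 / 2 \<le> a" "a \<le> 1"
    using a_coef_bounds[OF \<open>1 \<le> n\<close> \<open>n \<le> N\<close>] by (simp_all add: a_def)
  have "a * \<eta> \<le> 1"
    using a assms by (simp add: mult_le_one)
  then have b: "-1 < b" "b \<le> 0"
    using a \<open>0 < \<eta>\<close> by (simp_all add: b_def)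
  have V_eq: "V N \<eta> n k F = (\<Sum>j<n. F (k + j)) powr b" for F
    by (simp add: V_def a_def b_def)
  have "0 < (\<Sum>j<n. E (k + j))"
    using pos assms by (intro sum_pos) (auto simp: lessThan_empty_iff)
  moreover have "0 < q p" if "p \<in> {0<..<1}" for p
    using q that by auto
  ultimately have after: "V N \<eta> n k (jump N i E p x) \<le> q p powr b * V N \<eta> n k E"
    if "p \<in> {0<..<1}" "0 \<le> x" for p x
    unfolding V_eq using b that by (intro sum_powr_le_scaled keep) auto
  have int: "(\<integral>\<^sup>+p. indicator {0<..<1} p * ennreal (q p powr b) \<partial>lborel) = ennreal (1 / (b + 1))"
    using q nn_integral_powr_unit_interval[OF b(1)] nn_integral_one_minus_powr_unit_interval[OF b(1)]
    by auto
  have "cond_exp_after_ring N TL TR i (V N \<eta> n k) E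
      \<le> (\<integral>\<^sup>+p. indicator {0<..<1} p * ennreal (q p powr b * V N \<eta> n k E) \<partial>lborel)"
    using assms after by (intro cond_exp_after_ring_le)
  also have "\<dots> = (\<integral>\<^sup>+p. indicator {0<..<1} p * ennreal (q p powr b) \<partial>lborel) * ennreal (V N \<eta> n k E)"
    using q by (subst nn_integral_multc[symmetric]) (auto simp: ennreal_mult mult.assoc V_def)
  also have "\<dots> = ennreal (1 / (b + 1) * V N \<eta> n k E)"
    using int b by (simp add: ennreal_mult'[symmetric])
  also have "\<dots> \<le> ennreal (2 / \<eta> * V N \<eta> n k E)"
    using a \<open>0 < \<eta>\<close> by (intro ennreal_leI mult_right_mono) (auto simp: b_def V_def field_simps)
  finally show ?thesis .
qed

lemma cond_exp_after_block_clocks_V_le: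
  assumes "0 < TL" and "0 < TR" and "0 < \<eta>" and "\<eta> \<le> 1"
    and pos: "\<forall>j\<in>{1..N}. 0 < E j" and "1 \<le> n" and "n \<le> N" and "1 \<le> k" and "k + n \<le> N + 1"
  shows "cond_exp_after_ring N TL TR k (V N \<eta> n k) E \<le> ennreal (2 / \<eta> * V N \<eta> n k E)"
    and "cond_exp_after_ring N TL TR (k + n) (V N \<eta> n k) E \<le> ennreal (2 / \<eta> * V N \<eta> n k E)"
proof -
  have left_fraction: "(\<lambda>p. if k = 1 then p else 1 - p) = (\<lambda>p. p)
      \<or> (\<lambda>p::real. if k = 1 then p else 1 - p) = (\<lambda>p. 1 - p)"
    by (cases "k = 1") auto
  show "cond_exp_after_ring N TL TR k (V N \<eta> n k) E \<le> ennreal (2 / \<eta> * V N \<eta> n k E)"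
    using assms left_fraction jump_left_clock_keeps_fraction[OF pos \<open>1 \<le> k\<close> \<open>k + n \<le> N + 1\<close>]
    by (intro cond_exp_after_ring_V_le[where q = "\<lambda>p. if k = 1 then p else 1 - p"]) auto
  show "cond_exp_after_ring N TL TR (k + n) (V N \<eta> n k) E \<le> ennreal (2 / \<eta> * V N \<eta> n k E)"
    using assms jump_right_clock_keeps_fraction[OF pos \<open>1 \<le> k\<close> \<open>k + n \<le> N + 1\<close>]
    by (intro cond_exp_after_ring_V_le[where q = "\<lambda>p. p"]) auto
qed

theorem corollary4p3:
  fixes N :: nat and TL TR :: real
  assumes "N \<ge> 1" and "TL > 0" and "TR > 0"
  shows "\<exists>\<eta>0>0. \<forall>\<eta>. 0 < \<eta> \<and> \<eta> < \<eta>0 \<longrightarrow>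
           (\<exists>C>0. \<forall>(E :: nat \<Rightarrow> real) n k.
              (\<forall>j\<in>{1..N}. E j > 0) \<and> 1 \<le> n \<and> n \<le> N \<and> 1 \<le> k \<and> k \<le> N - n + 1 \<longrightarrow>
                cond_exp_after_ring N TL TR k (V N \<eta> n k) E \<le> ennreal (C * V N \<eta> n k E) \<and>
                cond_exp_after_ring N TL TR (k + n) (V N \<eta> n k) E \<le> ennreal (C * V N \<eta> n k E))"
proof (rule exI[of _ 1], intro conjI allI impI, goal_cases)
  case (2 \<eta>)
  then show ?case
    using cond_exp_after_block_clocks_V_le[OF assms(2,3)] by (intro exI[of _ "2 / \<eta>"]) auto
qed simp

end
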